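(* With the coupled chains $(X,Y)$ described in the context, for every $n\in\mathbb{Z}_+$, $$\mathbb{P}[\widehat Z(n)>0]\le\frac{2^{N+1}n}{N!},\qquad \mathbb{P}[\widetilde Z(n)>0]\le\frac{2^{N+1}n}{N!},$$ where $\widetilde Z(n)=\sum_{k=0}^{n-1}\mathbf{1}_{\{X(k)\le Y(k),\,X(k+1)>Y(k+1)\}}$ and $\widehat Z(n)=\sum_{k=0}^{n-1}\mathbf{1}_{\{X(k)\ge Y(k),\,X(k+1)<Y(k+1)\}}$.
   Context: Let $N\ge 5$. For $\sigma\in\mathcal{S}_N$ let $\eta_1(\sigma)$, $\eta_2(\sigma)$ be its numbers of fixed points and 2-cycles, $\nu$ the uniform measure on $\mathcal{S}_N$, $\pi_N$ the law of $\eta_1$ under $\nu$, and $p(x)=\mathbb{E}_\nu[\eta_2\mid\eta_1=x]$. Let $\check\pi$ be $\pi_N$ conditioned on $\{0,\dots,N-4\}$ and $\zeta$ the Poisson(1) law conditioned on $\{0,\dots,N-4\}$. On $\{0,\dots,N-4\}$ define birth–death kernels $\check P$ and $R$ by: for $x\ne y$, $\check P(x,x-1)=R(x,x-1)=\frac{x(N-x)}{N(N-1)}$, $\check P(x,x+1)=\frac{N-x-2p(x)}{N(N-1)}$ for $x\le N-5$, $R(x,x+1)=\frac{N-x-1}{N(N-1)}$ for $x\le N-5$, all other off-diagonal entries $0$, diagonal entries chosen so rows sum to 1. Let $(U(n))_{n\ge0}$ be i.i.d. uniform on $[0,1]$. The chain $X$ starts from $X(0)\sim\check\pi$, $Y$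 from $Y(0)\sim\zeta$ (coupled arbitrarily at time 0), and for each $n$: $X(n+1)=X(n)-1$ if $U(n)<\check P(X(n),X(n)-1)$, $X(n+1)=X(n)$ if $\check P(X(n),X(n)-1)\le U(n)<\check P(X(n),X(n)-1)+\check P(X(n),X(n))$, and $X(n+1)=X(n)+1$ otherwise; $Y$ is updated by the same rule with $R$ in place of $\check P$ and the same $U(n)$. *)

theory Defs
  imports "HOL-Probability.Probability"
begin

definition perms :: "nat \<Rightarrow> (nat \<Rightarrow> nat) set" where
  "perms N = {\<sigma>. \<sigma> permutes {..<N}}"

definition eta1 :: "nat \<Rightarrow> (nat \<Rightarrow> nat) \<Rightarrow> nat" where
  "eta1 N \<sigma> = card {i \<in> {..<N}. \<sigma> i = i}"

definition eta2 :: "nat \<Rightarrow> (nat \<Rightarrow> nat) \<Rightarrow> nat" where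
  "eta2 N \<sigma> = card {i \<in> {..<N}. \<sigma> i \<noteq> i \<and> \<sigma> (\<sigma> i) = i} div 2"

definition piN :: "nat \<Rightarrow> nat \<Rightarrow> real" where
  "piN N x = real (card {\<sigma> \<in> perms N. eta1 N \<sigma> = x}) / real (card (perms N))"

definition pcond :: "nat \<Rightarrow> nat \<Rightarrow> real" where
  "pcond N x = (\<Sum>\<sigma> \<in> {\<sigma> \<in> perms N. eta1 N \<sigma> = x}. real (eta2 N \<sigma>))
                / real (card {\<sigma> \<in> perms N. eta1 N \<sigma> = x})"

definition checkpi :: "nat \<Rightarrow> nat \<Rightarrow> real" where
  "checkpi N x = (if x \<le> N - 4 then piN N x / (\<Sum>y\<le>N - 4. piN N y) else 0)"

definition zeta :: "nat \<Rightarrow> nat \<Rightarrow> real" where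
  "zeta N x = (if x \<le> N - 4 then (exp (-1) / fact x) / (\<Sum>y\<le>N - 4. exp (-1) / fact y) else 0)"

definition kdown :: "nat \<Rightarrow> nat \<Rightarrow> real" where
  "kdown N x = real x * (real N - real x) / (real N * (real N - 1))"

definition Pup :: "nat \<Rightarrow> nat \<Rightarrow> real" where
  "Pup N x = (if x + 5 \<le> N then (real N - real x - 2 * pcond N x) / (real N * (real N - 1)) else 0)"

definition Rup :: "nat \<Rightarrow> nat \<Rightarrow> real" where
  "Rup N x = (if x + 5 \<le> N then (real N - real x - 1) / (real N * (real N - 1)) else 0)"

definition step :: "(nat \<Rightarrow> real) \<Rightarrow> (nat \<Rightarrow> real) \<Rightarrow> nat \<Rightarrow> real \<Rightarrow> nat" where
  "step dn up x u =
     (if u < dn x then x - 1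
      else if u < dn x + (1 - dn x - up x) then x
      else x + 1)"

primrec chain :: "(nat \<Rightarrow> real) \<Rightarrow> (nat \<Rightarrow> real) \<Rightarrow> nat \<Rightarrow> (nat \<Rightarrow> real) \<Rightarrow> nat \<Rightarrow> nat" where
  "chain dn up x0 u 0 = x0"
| "chain dn up x0 u (Suc n) = step dn up (chain dn up x0 u n) (u n)"

end

theory Submission
  imports Defs
begin

text \<open>
  A crossing of the coupled chains can only happen at a step k where both chains sit at a common
  state x \<le> N - 5 and U(k) falls between 1 - P(x, x+1) and 1 - R(x, x+1): the two kernels share
  their down-probabilities and all moves have size one. Since U(k) is independent of Y(k), and Y
  is stationary (R is reversible with respect to the conditioned Poisson law \<zeta>), such a step
  has probability at most \<zeta>(x) |R(x, x+1) - P(x, x+1)|. Counting permutations by fixed points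
  and 2-cycles via the derangement numbers !m gives |1 - 2 p(x)| = (N - x - 1) / !(N - x), and
  3 !m \<ge> m! bounds each term by 3 binom(N, x) / (N N!). Summing over x and taking a union bound
  over k yields the claim.
\<close>

section \<open>Derangements and permutations with a given number of fixed points\<close>

fun subfact :: "nat \<Rightarrow> nat" where
  "subfact 0 = 1"
| "subfact (Suc 0) = 0"
| "subfact (Suc (Suc n)) = Suc n * (subfact n + subfact (Suc n))"

lemma subfact_Suc_int: "int (subfact (Suc n)) = int (Suc n) * int (subfact n) + (-1) ^ Suc n"
proof (induction n rule: less_induct)
  case (less n)
  show ?case
  proof (cases n)
    case (Suc m)
    then have "int (subfact (Suc m)) = int (Suc m) * int (subfact m) + (-1) ^ Suc m"
      using less by simp
    then show ?thesis using Suc by (simp add: algebra_simps)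
  qed simp
qed

lemma subfact_Suc_Suc_deviation:
  "\<bar>int (subfact (Suc (Suc n))) - int (Suc (Suc n)) * int (Suc n) * int (subfact n)\<bar> = int (Suc n)"
proof -
  have "int (subfact (Suc (Suc n))) - int (Suc (Suc n)) * int (Suc n) * int (subfact n)
      = - ((-1) ^ n * int (Suc n))"
    unfolding subfact_Suc_int[of "Suc n"] subfact_Suc_int[of n] by (simp add: algebra_simps)
  then show ?thesis by (simp add: abs_mult power_abs)
qed

lemma fact_le_3_subfact: "2 \<le> n \<Longrightarrow> fact n \<le> 3 * subfact n"
proof (induction n rule: less_induct)
  case (less n)
  show ?case
  proof (cases "n \<le> 3")
    case True
    with less.prems have "n = 2 \<or> n = 3" by auto
    then show ?thesis by (auto simp: numeral_eq_Suc)
  next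
    case False
    define m where "m = n - 2"
    have n: "n = Suc (Suc m)" and m: "2 \<le> m" using False by (simp_all add: m_def)
    have "fact n = Suc m * (fact m + fact (Suc m))"
      by (simp add: n algebra_simps)
    also have "\<dots> \<le> Suc m * (3 * subfact m + 3 * subfact (Suc m))"
      using less.IH[of m] less.IH[of "Suc m"] m n by (intro mult_le_mono2 add_mono) auto
    also have "\<dots> = 3 * subfact n" by (simp add: n)
    finally show ?thesis .
  qed
qed

lemma subfact_pos: "2 \<le> n \<Longrightarrow> 0 < subfact n"
  using fact_le_3_subfact[of n] by (metis fact_gt_zero gr0I le_zero_eq mult_0_right not_le)

lemma sum_binomial_subfact: "(\<Sum>k\<le>n. (n choose k) * subfact k) = fact n"
proof (induction n)
  case (Suc n)
  have alt: "(\<Sum>k\<le>n. int (Suc n choose Suc k) * (-1) ^ Suc k) = -1"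
  proof -
    have "(\<Sum>k\<le>Suc n. (-1) ^ k * int (Suc n choose k)) = 0"
      using choose_alternating_sum[of "Suc n"] by simp
    then show ?thesis
      by (subst (asm) sum.atMost_Suc_shift) (simp add: mult.commute del: binomial_Suc_Suc)
  qed
  have absorb: "int (Suc n choose Suc k) * int (Suc k) = int (Suc n) * int (n choose k)" for k
    by (metis Suc_times_binomial_eq mult.commute of_nat_mult Suc_times_binomial)
  have summand: "int (Suc n choose Suc k) * (int (Suc k) * int (subfact k) + (-1) ^ Suc k)
      = int (Suc n) * (int (n choose k) * int (subfact k)) + int (Suc n choose Suc k) * (-1) ^ Suc k"
    for k by (simp only: distrib_left mult.assoc[symmetric] absorb)
  have "int (\<Sum>k\<le>Suc n. (Suc n choose k) * subfact k)
      = 1 + (\<Sum>k\<le>n. int (Suc n choose Suc k) * (int (Suc k) * int (subfact k) + (-1) ^ Suc k))"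
    by (subst sum.atMost_Suc_shift) (simp add: subfact_Suc_int del: binomial_Suc_Suc sum.atMost_Suc)
  also have "\<dots> = 1 + int (Suc n) * (\<Sum>k\<le>n. int (n choose k) * int (subfact k))
                    + (\<Sum>k\<le>n. int (Suc n choose Suc k) * (-1) ^ Suc k)"
    by (simp only: summand sum.distrib sum_distrib_left add.assoc)
  also have "\<dots> = int (fact (Suc n))"
  proof -
    have "(\<Sum>k\<le>n. int (n choose k) * int (subfact k)) = int (fact n)"
      using Suc by (simp flip: of_nat_mult of_nat_sum)
    then show ?thesis using alt by (simp add: algebra_simps)
  qed
  finally show ?case by (simp only: of_nat_eq_iff)
qed simp

definition derangements_on :: "'a set \<Rightarrow> ('a \<Rightarrow> 'a) set" where
  "derangements_on B = {\<sigma>. \<sigma> permutes B \<and> (\<forall>i\<in>B. \<sigma> i \<noteq> i)}"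

lemma finite_derangements_on: "finite B \<Longrightarrow> finite (derangements_on B)"
  unfolding derangements_on_def by (rule finite_subset[OF _ finite_permutations]) auto

lemma derangements_on_moved_points:
  "\<sigma> \<in> derangements_on C \<Longrightarrow> C \<subseteq> B \<Longrightarrow> {i\<in>B. \<sigma> i \<noteq> i} = C"
  unfolding derangements_on_def by (auto dest: permutes_not_in)

lemma disjoint_derangements_on:
  "C \<subseteq> B \<Longrightarrow> C' \<subseteq> B \<Longrightarrow> C \<noteq> C' \<Longrightarrow> derangements_on C \<inter> derangements_on C' = {}"
  using derangements_on_moved_points[of _ C B] derangements_on_moved_points[of _ C' B] by blast

lemma permutations_eq_UN_derangements_on:
  "{\<sigma>. \<sigma> permutes B} = (\<Union>C\<in>Pow B. derangements_on C)"
proof (intro set_eqI iffI)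
  fix \<sigma> assume "\<sigma> \<in> {\<sigma>. \<sigma> permutes B}"
  then have "\<sigma> permutes {i\<in>B. \<sigma> i \<noteq> i}" by (auto intro: permutes_superset)
  then show "\<sigma> \<in> (\<Union>C\<in>Pow B. derangements_on C)"
    by (intro UN_I[of "{i\<in>B. \<sigma> i \<noteq> i}"]) (auto simp: derangements_on_def)
qed (auto simp: derangements_on_def intro: permutes_subset)

lemma sum_Pow_card:
  fixes f :: "nat \<Rightarrow> 'b::comm_semiring_1"
  assumes "finite B"
  shows "(\<Sum>C\<in>Pow B. f (card C)) = (\<Sum>k\<le>card B. of_nat (card B choose k) * f k)"
proof -
  have "(\<Sum>C\<in>Pow B. f (card C)) = (\<Sum>k\<le>card B. \<Sum>C\<in>{C\<in>Pow B. card C = k}. f (card C))"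
    using assms by (intro sum.group[symmetric]) (auto intro: card_mono)
  also have "\<dots> = (\<Sum>k\<le>card B. of_nat (card B choose k) * f k)"
  proof (rule sum.cong[OF refl])
    fix k
    have "(\<Sum>C\<in>{C\<in>Pow B. card C = k}. f (card C)) = (\<Sum>C\<in>{C. C \<subseteq> B \<and> card C = k}. f k)"
      by (rule sum.cong) auto
    then show "(\<Sum>C\<in>{C\<in>Pow B. card C = k}. f (card C)) = of_nat (card B choose k) * f k"
      using n_subsets[OF assms, of k] by simp
  qed
  finally show ?thesis .
qed

lemma card_derangements_on: "finite B \<Longrightarrow> card (derangements_on B) = subfact (card B)"
proof (induction "card B" arbitrary: B rule: less_induct)
  case less
  have proper: "card (derangements_on C) = subfact (card C)" if "C \<in> Pow B - {B}" for C
  proof -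
    have "C \<subset> B" using that by auto
    then show ?thesis
      using less by (meson finite_subset psubset_card_mono psubset_imp_subset)
  qed
  have "card (derangements_on B) + (\<Sum>C\<in>Pow B - {B}. card (derangements_on C))
      = (\<Sum>C\<in>Pow B. card (derangements_on C))"
    using less by (subst sum.remove[of _ B]) auto
  also have "\<dots> = card {\<sigma>. \<sigma> permutes B}"
    unfolding permutations_eq_UN_derangements_on using less.prems
  proof (subst card_UN_disjoint)
    show "\<forall>C\<in>Pow B. \<forall>C'\<in>Pow B. C \<noteq> C' \<longrightarrow> derangements_on C \<inter> derangements_on C' = {}"
      by (intro ballI impI disjoint_derangements_on[of _ B]) auto
  qed (auto intro: finite_derangements_on finite_subset)
  also have "\<dots> = (\<Sum>C\<in>Pow B. subfact (card C))"
    using card_permutations[OF refl less.prems] sum_Pow_card[OF less.prems, of subfact]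
    by (simp add: sum_binomial_subfact)
  also have "\<dots> = subfact (card B) + (\<Sum>C\<in>Pow B - {B}. card (derangements_on C))"
    using less.prems by (subst sum.remove[of _ B]) (auto simp: proper)
  finally show ?case by simp
qed

definition permutations_with_fixpoints :: "'a set \<Rightarrow> nat \<Rightarrow> ('a \<Rightarrow> 'a) set" where
  "permutations_with_fixpoints A x = {\<sigma>. \<sigma> permutes A \<and> card {i\<in>A. \<sigma> i = i} = x}"

lemma finite_permutations_with_fixpoints:
  "finite A \<Longrightarrow> finite (permutations_with_fixpoints A x)"
  unfolding permutations_with_fixpoints_def
  by (rule finite_subset[OF _ finite_permutations]) auto

lemma card_permutations_with_fixpoints:
  assumes "finite A"
  shows "card (permutations_with_fixpoints A x) = (card A choose x) * subfact (card A - x)"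
proof -
  let ?K = "{K. K \<subseteq> A \<and> card K = x}"
  have split: "permutations_with_fixpoints A x = (\<Union>K\<in>?K. derangements_on (A - K))"
  proof safe
    fix \<sigma> assume "\<sigma> \<in> permutations_with_fixpoints A x"
    then have "\<sigma> permutes {i\<in>A. \<sigma> i \<noteq> i}" "card {i\<in>A. \<sigma> i = i} = x"
      by (auto simp: permutations_with_fixpoints_def intro: permutes_superset)
    moreover have "{i\<in>A. \<sigma> i \<noteq> i} = A - {i\<in>A. \<sigma> i = i}" by auto
    ultimately show "\<sigma> \<in> (\<Union>K\<in>?K. derangements_on (A - K))"
      by (intro UN_I[of "{i\<in>A. \<sigma> i = i}"]) (auto simp: derangements_on_def)
  next
    fix \<sigma> K assume "K \<subseteq> A" "x = card K" "\<sigma> \<in> derangements_on (A - K)"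
    then have "\<sigma> permutes A - K" "\<forall>i\<in>A - K. \<sigma> i \<noteq> i"
      by (auto simp: derangements_on_def)
    moreover from this have "{i\<in>A. \<sigma> i = i} = K"
      using \<open>K \<subseteq> A\<close> by (auto dest: permutes_not_in)
    ultimately show "\<sigma> \<in> permutations_with_fixpoints A (card K)"
      by (auto simp: permutations_with_fixpoints_def intro: permutes_subset)
  qed
  have "card (permutations_with_fixpoints A x) = (\<Sum>K\<in>?K. card (derangements_on (A - K)))"
    unfolding split using assms
  proof (subst card_UN_disjoint)
    show "\<forall>K\<in>?K. \<forall>K'\<in>?K. K \<noteq> K' \<longrightarrow> derangements_on (A - K) \<inter> derangements_on (A - K') = {}"
      by (intro ballI impI disjoint_derangements_on[of _ A]) auto
  qed (auto intro: finite_derangements_on)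
  also have "\<dots> = (\<Sum>K\<in>?K. subfact (card A - x))"
    using assms by (intro sum.cong refl) (auto simp: card_derangements_on card_Diff_subset finite_subset)
  also have "\<dots> = (card A choose x) * subfact (card A - x)"
    using n_subsets[OF assms] by simp
  finally show ?thesis .
qed

lemma fixpoints_transpose_comp:
  assumes "\<sigma> i = j" "\<sigma> j = i" "i \<noteq> j"
  shows "{k\<in>A - {i, j}. (Transposition.transpose i j \<circ> \<sigma>) k = k} = {k\<in>A. \<sigma> k = k}"
proof (intro set_eqI iffI)
  fix k assume "k \<in> {k\<in>A - {i, j}. (Transposition.transpose i j \<circ> \<sigma>) k = k}"
  then have k: "k \<in> A" "k \<noteq> i" "k \<noteq> j" "Transposition.transpose i j (\<sigma> k) = k" by auto
  then have "\<sigma> k = Transposition.transpose i j k" by (metis transpose_involutory)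
  with k show "k \<in> {k\<in>A. \<sigma> k = k}" by simp
next
  fix k assume "k \<in> {k\<in>A. \<sigma> k = k}"
  then have k: "k \<in> A" "\<sigma> k = k" by auto
  with assms have "k \<noteq> i" "k \<noteq> j" by metis+
  with k show "k \<in> {k\<in>A - {i, j}. (Transposition.transpose i j \<circ> \<sigma>) k = k}" by simp
qed

lemma card_permutations_with_fixpoints_swapping:
  assumes "i \<in> A" "j \<in> A" "i \<noteq> j"
  shows "card {\<sigma>\<in>permutations_with_fixpoints A x. \<sigma> i = j \<and> \<sigma> j = i}
       = card (permutations_with_fixpoints (A - {i, j}) x)"
proof (rule bij_betw_same_card[of "(\<circ>) (Transposition.transpose i j)"],
    rule bij_betw_byWitness[where f' = "(\<circ>) (Transposition.transpose i j)"])
  let ?t = "Transposition.transpose i j"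
  show "\<forall>\<sigma>\<in>{\<sigma>\<in>permutations_with_fixpoints A x. \<sigma> i = j \<and> \<sigma> j = i}. ?t \<circ> (?t \<circ> \<sigma>) = \<sigma>"
    "\<forall>\<tau>\<in>permutations_with_fixpoints (A - {i, j}) x. ?t \<circ> (?t \<circ> \<tau>) = \<tau>"
    by (auto simp: fun_eq_iff)
  have t: "?t permutes A" by (rule permutes_swap_id[OF assms(1,2)])
  show "(\<circ>) ?t ` {\<sigma>\<in>permutations_with_fixpoints A x. \<sigma> i = j \<and> \<sigma> j = i}
      \<subseteq> permutations_with_fixpoints (A - {i, j}) x"
  proof (rule image_subsetI)
    fix \<sigma> assume "\<sigma> \<in> {\<sigma>\<in>permutations_with_fixpoints A x. \<sigma> i = j \<and> \<sigma> j = i}"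
    then have \<sigma>: "\<sigma> permutes A" "card {k\<in>A. \<sigma> k = k} = x" "\<sigma> i = j" "\<sigma> j = i"
      by (auto simp: permutations_with_fixpoints_def)
    have "?t \<circ> \<sigma> permutes A - {i, j}"
      using \<sigma> by (intro permutes_superset[OF permutes_compose[OF \<sigma>(1) t]]) auto
    then show "?t \<circ> \<sigma> \<in> permutations_with_fixpoints (A - {i, j}) x"
      using \<sigma> fixpoints_transpose_comp[OF \<sigma>(3,4) assms(3), of A]
      by (simp add: permutations_with_fixpoints_def)
  qed
  show "(\<circ>) ?t ` permutations_with_fixpoints (A - {i, j}) x
      \<subseteq> {\<sigma>\<in>permutations_with_fixpoints A x. \<sigma> i = j \<and> \<sigma> j = i}"
  proof (rule image_subsetI)
    fix \<tau> assume "\<tau> \<in> permutations_with_fixpoints (A - {i, j}) x"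
    then have \<tau>: "\<tau> permutes A - {i, j}" "card {k\<in>A - {i, j}. \<tau> k = k} = x"
      by (auto simp: permutations_with_fixpoints_def)
    then have "\<tau> i = i" "\<tau> j = j" by (auto intro: permutes_not_in)
    then have swap: "(?t \<circ> \<tau>) i = j" "(?t \<circ> \<tau>) j = i" by simp_all
    have "?t \<circ> \<tau> permutes A"
      using permutes_compose[OF permutes_subset[OF \<tau>(1)] t] by blast
    moreover have "?t \<circ> (?t \<circ> \<tau>) = \<tau>" by (simp add: fun_eq_iff)
    ultimately show "?t \<circ> \<tau> \<in> {\<sigma>\<in>permutations_with_fixpoints A x. \<sigma> i = j \<and> \<sigma> j = i}"
      using \<tau>(2) swap fixpoints_transpose_comp[OF swap assms(3), of A]
      by (simp add: permutations_with_fixpoints_def)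
  qed
qed

definition two_cycle_points :: "'a set \<Rightarrow> ('a \<Rightarrow> 'a) \<Rightarrow> 'a set" where
  "two_cycle_points A \<sigma> = {i\<in>A. \<sigma> i \<noteq> i \<and> \<sigma> (\<sigma> i) = i}"

lemma card_permutations_with_fixpoints_two_cycle_point:
  assumes "finite A" "i \<in> A"
  shows "card {\<sigma>\<in>permutations_with_fixpoints A x. i \<in> two_cycle_points A \<sigma>}
       = (\<Sum>j\<in>A - {i}. card {\<sigma>\<in>permutations_with_fixpoints A x. \<sigma> i = j \<and> \<sigma> j = i})"
proof -
  have "{\<sigma>\<in>permutations_with_fixpoints A x. i \<in> two_cycle_points A \<sigma>}
      = (\<Union>j\<in>A - {i}. {\<sigma>\<in>permutations_with_fixpoints A x. \<sigma> i = j \<and> \<sigma> j = i})"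
  proof safe
    fix \<sigma> assume "\<sigma> \<in> permutations_with_fixpoints A x" "i \<in> two_cycle_points A \<sigma>"
    moreover from this have "\<sigma> i \<in> A"
      using assms(2) by (auto simp: permutations_with_fixpoints_def permutes_in_image)
    ultimately show "\<sigma> \<in> (\<Union>j\<in>A - {i}. {\<sigma>\<in>permutations_with_fixpoints A x. \<sigma> i = j \<and> \<sigma> j = i})"
      by (intro UN_I[of "\<sigma> i"]) (auto simp: two_cycle_points_def)
  qed (auto simp: two_cycle_points_def assms)
  then show ?thesis
    using assms finite_permutations_with_fixpoints[OF assms(1)]
    by (simp, intro card_UN_disjoint) (auto intro: finite_subset)
qed

lemma sum_card_two_cycle_points:
  assumes "finite A"
  shows "(\<Sum>\<sigma>\<in>permutations_with_fixpoints A x. card (two_cycle_points A \<sigma>))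
       = card A * (card A - 1) * ((card A - 2) choose x) * subfact (card A - 2 - x)"
proof -
  let ?P = "permutations_with_fixpoints A x"
  have "(\<Sum>\<sigma>\<in>?P. card (two_cycle_points A \<sigma>)) = (\<Sum>\<sigma>\<in>?P. \<Sum>i\<in>A. if i \<in> two_cycle_points A \<sigma> then 1 else 0)"
    using assms by (intro sum.cong) (auto simp: two_cycle_points_def Int_def[symmetric]
        simp flip: sum.inter_filter)
  also have "\<dots> = (\<Sum>i\<in>A. card {\<sigma>\<in>?P. i \<in> two_cycle_points A \<sigma>})"
    using finite_permutations_with_fixpoints[OF assms]
    by (subst sum.swap) (simp add: sum.If_cases Int_def)
  also have "\<dots> = (\<Sum>i\<in>A. \<Sum>j\<in>A - {i}. ((card A - 2) choose x) * subfact (card A - 2 - x))"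
  proof (intro sum.cong refl)
    fix i assume i: "i \<in> A"
    have "card {\<sigma>\<in>?P. \<sigma> i = j \<and> \<sigma> j = i} = ((card A - 2) choose x) * subfact (card A - 2 - x)"
      if j: "j \<in> A - {i}" for j
    proof -
      have "card (A - {i, j}) = card A - 2"
        using assms i j by (subst card_Diff_subset) auto
      then show ?thesis
        using card_permutations_with_fixpoints_swapping[OF i _ _, of j x] j assms
          card_permutations_with_fixpoints[of "A - {i, j}" x] by auto
    qed
    then show "card {\<sigma>\<in>?P. i \<in> two_cycle_points A \<sigma>}
        = (\<Sum>j\<in>A - {i}. ((card A - 2) choose x) * subfact (card A - 2 - x))"
      using assms i by (simp add: card_permutations_with_fixpoints_two_cycle_point)
  qed
  also have "\<dots> = card A * (card A - 1) * ((card A - 2) choose x) * subfact (card A - 2 - x)"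
    using assms by (simp add: card_Diff_singleton)
  finally show ?thesis .
qed

lemma even_card_fixpoint_free_involution:
  assumes "finite S" "\<And>i. i \<in> S \<Longrightarrow> f i \<in> S \<and> f i \<noteq> i \<and> f (f i) = i"
  shows "even (card S)"
  using assms
proof (induction "card S" arbitrary: S rule: less_induct)
  case less
  show ?case
  proof (cases "S = {}")
    case False
    then obtain i where i: "i \<in> S" by auto
    let ?S = "S - {i, f i}"
    have fi: "f i \<in> S" "f i \<noteq> i" "f (f i) = i" using less.prems(2)[OF i] by auto
    have card: "card S = card ?S + 2"
    proof -
      have "card ?S = card S - 2" using i fi less.prems(1) by (simp add: card_Diff_subset)
      moreover have "card {i, f i} \<le> card S" using i fi less.prems(1) by (intro card_mono) auto
      ultimately show ?thesis using fi by simp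
    qed
    have "f k \<in> ?S \<and> f k \<noteq> k \<and> f (f k) = k" if k: "k \<in> ?S" for k
    proof -
      have "f k \<in> S" "f k \<noteq> k" "f (f k) = k" using less.prems(2)[of k] k by auto
      moreover have "f k \<noteq> i" "f k \<noteq> f i" using k fi \<open>f (f k) = k\<close> by auto
      ultimately show ?thesis by auto
    qed
    then have "even (card ?S)"
      using less.prems(1) card by (intro less.hyps) auto
    with card show ?thesis by simp
  qed simp
qed

lemma even_card_two_cycle_points:
  "\<sigma> permutes A \<Longrightarrow> finite A \<Longrightarrow> even (card (two_cycle_points A \<sigma>))"
  by (rule even_card_fixpoint_free_involution[of _ \<sigma>])
     (auto simp: two_cycle_points_def permutes_in_image)

lemma binomial_absorb_comp_2:
  assumes "x + 2 \<le> N"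
  shows "N * (N - 1) * ((N - 2) choose x) = (N choose x) * (N - x) * (N - x - 1)"
proof -
  have "N * (N - 1) * ((N - 2) choose x) = N * ((N - 1 - x) * ((N - 1) choose x))"
    using binomial_absorb_comp[of "N - 1" x] by (simp add: diff_diff_add numeral_2_eq_2 mult.assoc)
  also have "\<dots> = (N - 1 - x) * (N * ((N - 1) choose x))" by (simp add: mult_ac)
  also have "\<dots> = (N choose x) * (N - x) * (N - x - 1)"
    using binomial_absorb_comp[of N x] by (simp add: mult_ac)
  finally show ?thesis .
qed

lemma fixpoint_class_eq_permutations_with_fixpoints:
  "{\<sigma> \<in> perms N. eta1 N \<sigma> = x} = permutations_with_fixpoints {..<N} x"
  by (auto simp: perms_def eta1_def permutations_with_fixpoints_def)

lemma pcond_eq: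
  assumes "x + 2 \<le> N"
  shows "pcond N x = real ((N - x) * (N - x - 1) * subfact (N - x - 2)) / (2 * real (subfact (N - x)))"
proof -
  let ?P = "permutations_with_fixpoints {..<N} x"
  have "(\<Sum>\<sigma>\<in>?P. real (eta2 N \<sigma>)) = (\<Sum>\<sigma>\<in>?P. real (card (two_cycle_points {..<N} \<sigma>)) / 2)"
  proof (rule sum.cong[OF refl])
    fix \<sigma> assume "\<sigma> \<in> ?P"
    then have "even (card (two_cycle_points {..<N} \<sigma>))"
      by (intro even_card_two_cycle_points) (auto simp: permutations_with_fixpoints_def)
    then show "real (eta2 N \<sigma>) = real (card (two_cycle_points {..<N} \<sigma>)) / 2"
      by (auto simp: eta2_def two_cycle_points_def elim!: evenE)
  qed
  also have "\<dots> = real ((N choose x) * (N - x) * (N - x - 1) * subfact (N - x - 2)) / 2"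
    using sum_card_two_cycle_points[of "{..<N}" x] binomial_absorb_comp_2[OF assms]
    by (simp add: diff_diff_add flip: sum_divide_distrib of_nat_sum)
  finally have sum_eta2: "(\<Sum>\<sigma>\<in>?P. real (eta2 N \<sigma>))
      = real (N choose x) * real ((N - x) * (N - x - 1) * subfact (N - x - 2)) / 2"
    by simp
  have card_P: "card ?P = (N choose x) * subfact (N - x)"
    by (simp add: card_permutations_with_fixpoints)
  have cancel: "c * a / 2 / (c * b) = a / (2 * b)" if "c \<noteq> 0" for a b c :: real
    using that by (cases "b = 0") (simp_all add: field_simps)
  show ?thesis
    unfolding pcond_def fixpoint_class_eq_permutations_with_fixpoints sum_eta2 card_P
      of_nat_mult[of "N choose x"]
    by (rule cancel) (use assms in simp)
qed

lemma abs_1_minus_2_pcond: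
  assumes "x + 2 \<le> N"
  shows "\<bar>1 - 2 * pcond N x\<bar> = real (N - x - 1) / real (subfact (N - x))"
proof -
  define m where "m = N - x - 2"
  have m: "N - x = Suc (Suc m)" using assms by (simp add: m_def)
  have pos: "0 < subfact (Suc (Suc m))" by (rule subfact_pos) simp
  have "1 - 2 * pcond N x
      = (real (subfact (Suc (Suc m))) - real (Suc (Suc m)) * real (Suc m) * real (subfact m))
        / real (subfact (Suc (Suc m)))"
    using pos unfolding pcond_eq[OF assms] m by (simp add: field_simps del: subfact.simps)
  also have "\<bar>\<dots>\<bar> = real (Suc m) / real (subfact (Suc (Suc m)))"
    using arg_cong[OF subfact_Suc_Suc_deviation[of m], of real_of_int] by (simp add: abs_div_pos)
  finally show ?thesis by (simp add: m)
qed

section \<open>The kernels and the conditioned Poisson law\<close>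

lemma pcond_nonneg: "0 \<le> pcond N x"
  unfolding pcond_def by (intro divide_nonneg_nonneg sum_nonneg) auto

lemma zeta_nonneg: "0 \<le> zeta N x"
  unfolding zeta_def by (auto intro!: divide_nonneg_nonneg sum_nonneg mult_nonneg_nonneg)

lemma exp_minus_1_le_poisson_normalizer:
  "exp (-1) \<le> (\<Sum>y\<le>N - 4. exp (-1) / fact y :: real)"
  using member_le_sum[of 0 "{..N - 4}" "\<lambda>y. exp (-1) / fact y :: real"] by simp

lemma poisson_normalizer_pos: "0 < (\<Sum>y\<le>N - 4. exp (-1) / fact y :: real)"
  using exp_minus_1_le_poisson_normalizer[of N] exp_gt_zero[of "-1"] by linarith

lemma zeta_le_inverse_fact: "zeta N x \<le> 1 / fact x"
proof (cases "x \<le> N - 4")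
  case True
  let ?S = "(\<Sum>y\<le>N - 4. exp (-1) / fact y :: real)"
  have "exp (-1) / ?S \<le> 1"
    using exp_minus_1_le_poisson_normalizer[of N] poisson_normalizer_pos[of N]
    by (simp add: divide_le_eq)
  then have "exp (-1) / ?S * (1 / fact x) \<le> 1 * (1 / fact x)"
    by (intro mult_right_mono) auto
  moreover have "zeta N x = exp (-1) / ?S * (1 / fact x)"
    using True by (simp add: zeta_def)
  ultimately show ?thesis by simp
qed (simp add: zeta_def)

lemma sum_zeta: "(\<Sum>y\<le>N - 4. zeta N y) = 1"
proof -
  let ?S = "(\<Sum>y\<le>N - 4. exp (-1) / fact y :: real)"
  have "(\<Sum>y\<le>N - 4. zeta N y) = (\<Sum>y\<le>N - 4. (exp (-1) / fact y) / ?S)"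
    by (rule sum.cong) (auto simp: zeta_def)
  also have "\<dots> = ?S / ?S" by (simp only: sum_divide_distrib)
  finally show ?thesis using poisson_normalizer_pos[of N] by simp
qed

lemma zeta_detailed_balance: "zeta N y * Rup N y = zeta N (Suc y) * kdown N (Suc y)"
proof (cases "y + 5 \<le> N")
  case True
  let ?S = "(\<Sum>y\<le>N - 4. exp (-1) / fact y :: real)"
  have zeta_y: "zeta N y = exp (-1) / fact y / ?S"
    and zeta_Suc_y: "zeta N (Suc y) = exp (-1) / (real (Suc y) * fact y) / ?S"
    using True by (simp_all add: zeta_def)
  have "0 < real N" "0 < real N - 1" "0 < (fact y :: real)" using True by auto
  then show ?thesis
    unfolding zeta_y zeta_Suc_y using True poisson_normalizer_pos[of N]
    by (simp add: Rup_def kdown_def divide_simps of_nat_diff)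
qed (simp add: Rup_def zeta_def)

lemma kdown_nonneg: "z \<le> N \<Longrightarrow> 0 \<le> kdown N z"
  by (cases "N = 0") (auto simp: kdown_def intro!: divide_nonneg_nonneg mult_nonneg_nonneg)

lemma kdown_le:
  assumes "5 \<le> N"
  shows "kdown N z \<le> 5 / 16"
proof -
  have NN: "0 < real N * (real N - 1)" using assms by simp
  have "real z * (real N - real z) \<le> real N ^ 2 / 4"
    using sum_power2_ge_zero[of "real N - 2 * real z" 0] by (simp add: power2_eq_square algebra_simps)
  then have "kdown N z \<le> (real N ^ 2 / 4) / (real N * (real N - 1))"
    unfolding kdown_def using NN by (intro divide_right_mono) auto
  also have "\<dots> \<le> 5 / 16" using assms NN by (simp add: field_simps power2_eq_square)
  finally show ?thesis .
qed

lemma Rup_nonneg: "5 \<le> N \<Longrightarrow> 0 \<le> Rup N z"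
  unfolding Rup_def by (auto intro!: divide_nonneg_nonneg)

lemma Rup_le:
  assumes "5 \<le> N"
  shows "Rup N z \<le> 1 / 4"
proof (cases "z + 5 \<le> N")
  case True
  have NN: "0 < real N * (real N - 1)" using assms by simp
  have "Rup N z = (real N - real z - 1) / (real N * (real N - 1))" using True by (simp add: Rup_def)
  also have "\<dots> \<le> (real N - 1) / (real N * (real N - 1))" using NN by (intro divide_right_mono) auto
  also have "\<dots> = 1 / real N" using assms by (simp add: divide_simps)
  also have "\<dots> \<le> 1 / 4" using assms by (simp add: field_simps)
  finally show ?thesis .
qed (simp add: Rup_def)

lemma Pup_le:
  assumes "5 \<le> N"
  shows "Pup N z \<le> 1 / 4"
proof (cases "z + 5 \<le> N")
  case True
  have NN: "0 < real N * (real N - 1)" using assms by simp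
  have "Pup N z = (real N - real z - 2 * pcond N z) / (real N * (real N - 1))"
    using True by (simp add: Pup_def)
  also have "\<dots> \<le> real N / (real N * (real N - 1))"
    using NN pcond_nonneg[of N z] by (intro divide_right_mono) auto
  also have "\<dots> = 1 / (real N - 1)" using assms by (simp add: divide_simps)
  also have "\<dots> \<le> 1 / 4" using assms by (simp add: field_simps)
  finally show ?thesis .
qed (simp add: Pup_def)

lemma abs_Rup_minus_Pup:
  assumes "x + 5 \<le> N"
  shows "\<bar>Rup N x - Pup N x\<bar> = real (N - x - 1) / real (subfact (N - x)) / (real N * (real N - 1))"
proof -
  have NN: "0 < real N * (real N - 1)" using assms by simp
  have "Rup N x - Pup N x
      = ((real N - real x - 1) - (real N - real x - 2 * pcond N x)) / (real N * (real N - 1))"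
    using assms by (simp add: Rup_def Pup_def diff_divide_distrib)
  also have "\<dots> = (2 * pcond N x - 1) / (real N * (real N - 1))" by simp
  finally show ?thesis
    using abs_1_minus_2_pcond[of x N] assms NN by (simp add: abs_div_pos abs_minus_commute)
qed

lemma zeta_mult_abs_Rup_minus_Pup_le:
  assumes "x + 5 \<le> N"
  shows "zeta N x * \<bar>Rup N x - Pup N x\<bar> \<le> 3 * real (N choose x) / (fact N * real N)"
proof -
  let ?m = "N - x"
  have NN: "0 < real N * (real N - 1)" using assms by simp
  have pos: "0 < real N" "0 < real N - 1" "0 < (fact N :: real)" using assms by auto
  have "real (fact ?m) \<le> real (3 * subfact ?m)"
    using fact_le_3_subfact[of ?m] assms by (simp only: of_nat_le_iff)
  then have subfact_ge: "fact ?m \<le> 3 * real (subfact ?m)" by simp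
  have subfact_pos: "0 < real (subfact ?m)" using subfact_pos[of ?m] assms by simp
  have "zeta N x * \<bar>Rup N x - Pup N x\<bar>
      \<le> (1 / fact x) * (real (?m - 1) / real (subfact ?m) / (real N * (real N - 1)))"
    unfolding abs_Rup_minus_Pup[OF assms]
    using zeta_le_inverse_fact[of N x] NN subfact_pos by (intro mult_right_mono) auto
  also have "\<dots> \<le> (1 / fact x) * (real (?m - 1) * 3 / fact ?m / (real N * (real N - 1)))"
  proof -
    have "real (?m - 1) / real (subfact ?m) = real (?m - 1) * 3 / (3 * real (subfact ?m))" by simp
    also have "\<dots> \<le> real (?m - 1) * 3 / fact ?m"
      by (rule divide_left_mono) (use subfact_ge subfact_pos in auto)
    finally show ?thesis using NN by (intro mult_left_mono divide_right_mono) auto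
  qed
  also have "\<dots> = 3 * real (N choose x) * real (?m - 1) / (fact N * (real N * (real N - 1)))"
  proof -
    have "real (N choose x) = fact N / (fact x * fact ?m)" using assms by (simp add: binomial_fact)
    moreover have "fact x > (0::real)" "fact ?m > (0::real)" by auto
    ultimately show ?thesis using pos by (simp add: divide_simps)
  qed
  also have "\<dots> \<le> 3 * real (N choose x) * (real N - 1) / (fact N * (real N * (real N - 1)))"
    using NN assms by (intro divide_right_mono mult_left_mono) auto
  also have "\<dots> = 3 * real (N choose x) / (fact N * real N)"
    using pos by (simp add: divide_simps)
  finally show ?thesis .
qed

lemma sum_zeta_mult_abs_Rup_minus_Pup_le:
  assumes "5 \<le> N"
  shows "(\<Sum>x\<le>N - 5. zeta N x * \<bar>Rup N x - Pup N x\<bar>) \<le> 2 ^ (N + 1) / fact N"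
proof -
  have "(\<Sum>x\<le>N - 5. zeta N x * \<bar>Rup N x - Pup N x\<bar>)
      \<le> (\<Sum>x\<le>N - 5. 3 * real (N choose x) / (fact N * real N))"
    using assms by (intro sum_mono zeta_mult_abs_Rup_minus_Pup_le) auto
  also have "\<dots> = 3 / (fact N * real N) * real (\<Sum>x\<le>N - 5. N choose x)"
    by (simp add: sum_distrib_left)
  also have "\<dots> \<le> 3 / (fact N * real N) * real (\<Sum>x\<le>N. N choose x)"
    by (intro mult_left_mono of_nat_mono sum_mono2) auto
  also have "\<dots> = 3 / (fact N * real N) * 2 ^ N" by (simp add: choose_row_sum)
  also have "\<dots> \<le> 2 ^ (N + 1) / fact N"
  proof -
    have "3 / real N \<le> 2" using assms by (simp add: field_simps)
    then have "3 / real N * 2 ^ N \<le> 2 * 2 ^ N" by (intro mult_right_mono) auto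
    then show ?thesis by (simp add: field_simps)
  qed
  finally show ?thesis .
qed

lemma step_eq: "step dn up x u = (if u < dn x then x - 1 else if u < 1 - up x then x else x + 1)"
  unfolding step_def by simp

lemma measurable_step: "(\<lambda>u::real. step dn up x u) \<in> measurable borel (count_space UNIV)"
  unfolding step_def by measurable

lemma step_crossing:
  fixes dn P R :: "nat \<Rightarrow> real"
  assumes P: "\<And>z w. dn z + P w < 1" and R: "\<And>z w. dn z + R w < 1"
    and cross: "(y \<le> x \<and> step dn P x u < step dn R y u) \<or> (x \<le> y \<and> step dn R y u < step dn P x u)"
  shows "x = y \<and> min (1 - P x) (1 - R x) \<le> u \<and> u < max (1 - P x) (1 - R x)"
proof -
  have "x = y"
  proof (rule ccontr)
    have a: "dn x + R y < 1" "dn y + P x < 1" using P R by auto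
    assume "x \<noteq> y"
    then consider "x = Suc y" | "y = Suc x" | "y + 2 \<le> x" | "x + 2 \<le> y" by linarith
    then show False
    proof cases
      case 1 then show False using cross a unfolding step_eq by (auto split: if_splits)
    next
      case 2 then show False using cross a unfolding step_eq by (auto split: if_splits)
    next
      case 3 then show False using cross unfolding step_eq by (auto split: if_splits)
    next
      case 4 then show False using cross unfolding step_eq by (auto split: if_splits)
    qed
  qed
  then show ?thesis using cross unfolding step_eq by (auto split: if_splits)
qed

lemma kdown_plus_Pup_less_1: "5 \<le> N \<Longrightarrow> kdown N z + Pup N w < 1"
  using kdown_le[of N z] Pup_le[of N w] by simp

lemma kdown_plus_Rup_less_1: "5 \<le> N \<Longrightarrow> kdown N z + Rup N w < 1"
  using kdown_le[of N z] Rup_le[of N w] by simp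

abbreviation uniform01 :: "real measure" where
  "uniform01 \<equiv> uniform_measure lborel {0..1}"

lemma measure_uniform01: "A \<in> sets borel \<Longrightarrow> measure uniform01 A = measure lborel ({0..1} \<inter> A)"
  by (subst measure_uniform_measure) auto

lemma measure_uniform01_less: "0 \<le> a \<Longrightarrow> a \<le> 1 \<Longrightarrow> measure uniform01 {u. u < a} = a"
proof -
  assume "0 \<le> a" "a \<le> 1"
  then have "{0..1} \<inter> {u. u < a} = {0..<a}" by auto
  then show ?thesis using \<open>0 \<le> a\<close> by (simp add: measure_uniform01)
qed

lemma measure_uniform01_interval:
  "0 \<le> a \<Longrightarrow> a \<le> b \<Longrightarrow> b \<le> 1 \<Longrightarrow> measure uniform01 {u. a \<le> u \<and> u < b} = b - a"
proof -
  assume "0 \<le> a" "a \<le> b" "b \<le> 1"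
  then have "{0..1} \<inter> {u. a \<le> u \<and> u < b} = {a..<b}" by auto
  then show ?thesis using \<open>a \<le> b\<close> by (simp add: measure_uniform01)
qed

lemma measure_uniform01_ge: "0 \<le> b \<Longrightarrow> b \<le> 1 \<Longrightarrow> measure uniform01 {u. b \<le> u} = 1 - b"
proof -
  assume "0 \<le> b" "b \<le> 1"
  then have "{0..1} \<inter> {u. b \<le> u} = {b..1}" by auto
  then show ?thesis using \<open>b \<le> 1\<close> by (simp add: measure_uniform01)
qed

lemma measure_uniform01_interval_le:
  assumes "a \<le> b"
  shows "measure uniform01 {u. a \<le> u \<and> u < b} \<le> b - a"
proof -
  have "measure uniform01 {u. a \<le> u \<and> u < b} = measure lborel ({0..1} \<inter> {a..<b})"
    by (simp add: measure_uniform01 atLeastLessThan_def atLeast_def lessThan_def Collect_conj_eq)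
  also have "\<dots> \<le> measure lborel {a..<b}"
    by (rule measure_mono_fmeasurable) (auto simp: fmeasurable_def assms)
  also have "\<dots> = b - a" using assms by simp
  finally show ?thesis .
qed

definition Rtrans :: "nat \<Rightarrow> nat \<Rightarrow> nat \<Rightarrow> real" where
  "Rtrans N y x = (if x + 1 = y then kdown N y else 0) + (if x = y then 1 - kdown N y - Rup N y else 0)
                 + (if x = y + 1 then Rup N y else 0)"

lemma measure_uniform01_step:
  assumes N: "5 \<le> N" and y: "y \<le> N"
  shows "measure uniform01 {u. step (kdown N) (Rup N) y u = x} = Rtrans N y x"
proof -
  let ?a = "kdown N y" and ?b = "1 - Rup N y"
  have a0: "0 \<le> ?a" using kdown_nonneg[OF y] .
  have ab: "?a \<le> ?b" using kdown_le[OF N, of y] Rup_le[OF N, of y] by simp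
  have b1: "?b \<le> 1" "0 \<le> ?b" using Rup_nonneg[OF N, of y] Rup_le[OF N, of y] by auto
  have eq: "{u. step (kdown N) (Rup N) y u = x} =
     (if y - 1 = x then {u. u < ?a} else {})
     \<union> ((if y = x then {u. ?a \<le> u \<and> u < ?b} else {}) \<union> (if y + 1 = x then {u. ?b \<le> u} else {}))"
    using ab by (auto simp: step_eq split: if_splits)
  interpret finite_measure uniform01
    by (rule prob_space.finite_measure, rule prob_space_uniform_measure) auto
  have "measure uniform01 {u. step (kdown N) (Rup N) y u = x}
      = measure uniform01 (if y - 1 = x then {u. u < ?a} else {})
        + (measure uniform01 (if y = x then {u. ?a \<le> u \<and> u < ?b} else {})
          + measure uniform01 (if y + 1 = x then {u. ?b \<le> u} else {}))"
    unfolding eq by (subst finite_measure_Union; (subst finite_measure_Union)?) auto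
  also have "\<dots> = (if y - 1 = x then ?a else 0) + ((if y = x then ?b - ?a else 0) + (if y + 1 = x then 1 - ?b else 0))"
  proof -
    have "measure uniform01 {u. u < ?a} = ?a"
      using a0 ab b1 by (intro measure_uniform01_less) auto
    moreover have "measure uniform01 {u. ?a \<le> u \<and> u < ?b} = ?b - ?a"
      using a0 ab b1 by (intro measure_uniform01_interval) auto
    moreover have "measure uniform01 {u. ?b \<le> u} = 1 - ?b"
      using b1 by (intro measure_uniform01_ge) auto
    ultimately show ?thesis by (simp only: if_distrib[of "measure uniform01"] measure_empty)
  qed
  also have "(if y - 1 = x then ?a else 0) = (if x + 1 = y then ?a else 0)"
    by (cases y) (auto simp: kdown_def)
  finally show ?thesis by (simp add: Rtrans_def)
qed

lemma zeta_stationary: "(\<Sum>y\<le>N - 4. zeta N y * Rtrans N y x) = zeta N x"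
proof -
  have zeta_out: "zeta N z = 0" if "\<not> z \<le> N - 4" for z using that by (simp add: zeta_def)
  have "(\<Sum>y\<le>N - 4. zeta N y * Rtrans N y x)
    = (\<Sum>y\<le>N - 4. (if y = x + 1 then zeta N y * kdown N y else 0))
      + (\<Sum>y\<le>N - 4. (if y = x then zeta N y * (1 - kdown N y - Rup N y) else 0))
      + (\<Sum>y\<le>N - 4. (if x = y + 1 then zeta N y * Rup N y else 0))"
    unfolding Rtrans_def sum.distrib[symmetric] by (rule sum.cong) auto
  also have "(\<Sum>y\<le>N - 4. (if y = x + 1 then zeta N y * kdown N y else 0)) = zeta N x * Rup N x"
    using zeta_detailed_balance[of N x] zeta_out[of "x + 1"] by (simp add: sum.delta')
  also have "(\<Sum>y\<le>N - 4. (if y = x then zeta N y * (1 - kdown N y - Rup N y) else 0))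
      = zeta N x * (1 - kdown N x - Rup N x)"
    using zeta_out[of x] by (simp add: sum.delta')
  also have "(\<Sum>y\<le>N - 4. (if x = y + 1 then zeta N y * Rup N y else 0)) = zeta N x * kdown N x"
  proof (cases x)
    case 0 then show ?thesis by (simp add: kdown_def)
  next
    case (Suc z)
    have "(\<Sum>y\<le>N - 4. (if x = y + 1 then zeta N y * Rup N y else 0))
        = (\<Sum>y\<le>N - 4. (if y = z then zeta N y * Rup N y else 0))"
      using Suc by (intro sum.cong) auto
    also have "\<dots> = zeta N z * Rup N z" using zeta_out[of z] by (simp add: sum.delta')
    finally show ?thesis using zeta_detailed_balance[of N z] Suc by simp
  qed
  finally show ?thesis by (simp add: algebra_simps)
qed

section \<open>The coupled chains\<close>

lemma chain_cong: "(\<And>j. j < k \<Longrightarrow> u j = v j) \<Longrightarrow> chain dn up x0 u k = chain dn up x0 v k"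
  by (induction k) auto

lemma measurable_chain:
  assumes "\<And>i. i < k \<Longrightarrow> i \<in> I"
  shows "(\<lambda>u. chain dn up x0 u k) \<in> measurable (PiM I (\<lambda>_. borel)) (count_space UNIV)"
  using assms
proof (induction k)
  case (Suc k)
  have IH: "(\<lambda>u. chain dn up x0 u k) \<in> measurable (PiM I (\<lambda>_. borel)) (count_space UNIV)"
    using Suc by auto
  have k: "k \<in> I" using Suc by auto
  have "(\<lambda>u. step dn up i (u k)) \<in> measurable (PiM I (\<lambda>_. borel)) (count_space UNIV)" for i
    using measurable_comp[OF measurable_component_singleton[OF k] measurable_step] by (simp add: comp_def)
  then show ?case
    using measurable_compose_countable[where f = "\<lambda>i u. step dn up i (u k)", OF _ IH] by simp
qed simp

lemma sets_PiM_chain_conj: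
  assumes "B \<in> sets borel"
  shows "{u. chain dn up x0 u k = y \<and> u k \<in> B} \<in> sets (PiM UNIV (\<lambda>_. (borel :: real measure)))"
proof -
  have "(\<lambda>u. chain dn up x0 u k) \<in> measurable (PiM UNIV (\<lambda>_. borel)) (count_space UNIV)"
    by (rule measurable_chain) simp
  then have "{u \<in> space (PiM UNIV (\<lambda>_. (borel :: real measure))). chain dn up x0 u k = y \<and> u k \<in> B}
      \<in> sets (PiM UNIV (\<lambda>_. (borel :: real measure)))"
    using assms by measurable
  then show ?thesis by (simp add: space_PiM)
qed

lemma (in prob_space) prob_eq_sum_prob_conj:
  fixes Z :: "'a \<Rightarrow> nat"
  assumes Z: "Z \<in> measurable M (count_space UNIV)"
    and total: "(\<Sum>z\<le>L. prob {\<omega>\<in>space M. Z \<omega> = z}) = 1"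
    and P: "{\<omega>\<in>space M. P \<omega>} \<in> sets M"
  shows "prob {\<omega>\<in>space M. P \<omega>} = (\<Sum>z\<le>L. prob {\<omega>\<in>space M. Z \<omega> = z \<and> P \<omega>})"
proof -
  have Z_sets: "{\<omega>\<in>space M. Z \<omega> = z} \<in> sets M" for z using Z by measurable
  have ZP_sets: "{\<omega>\<in>space M. Z \<omega> = z \<and> P \<omega>} \<in> sets M" for z
  proof -
    have "{\<omega>\<in>space M. Z \<omega> = z \<and> P \<omega>} = {\<omega>\<in>space M. Z \<omega> = z} \<inter> {\<omega>\<in>space M. P \<omega>}"
      by auto
    then show ?thesis using Z_sets P by auto
  qed
  have Z_le: "{\<omega>\<in>space M. Z \<omega> \<le> L} = (\<Union>z\<in>{..L}. {\<omega>\<in>space M. Z \<omega> = z})" by auto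
  have "prob {\<omega>\<in>space M. Z \<omega> \<le> L} = 1"
    unfolding Z_le using total Z_sets
    by (subst finite_measure_finite_Union) (auto simp: disjoint_family_on_def)
  then have AE: "AE \<omega> in M. \<omega> \<in> {\<omega>\<in>space M. Z \<omega> \<le> L}" by (rule AE_prob_1)
  have P_Z_le: "{\<omega>\<in>space M. P \<omega> \<and> Z \<omega> \<le> L} = (\<Union>z\<in>{..L}. {\<omega>\<in>space M. Z \<omega> = z \<and> P \<omega>})"
    by auto
  have "prob {\<omega>\<in>space M. P \<omega>} = prob {\<omega>\<in>space M. P \<omega> \<and> Z \<omega> \<le> L}"
  proof (rule measure_eq_AE)
    show "AE \<omega> in M. (\<omega> \<in> {\<omega> \<in> space M. P \<omega>}) = (\<omega> \<in> {\<omega> \<in> space M. P \<omega> \<and> Z \<omega> \<le> L})"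
      using AE by eventually_elim auto
    show "{\<omega> \<in> space M. P \<omega> \<and> Z \<omega> \<le> L} \<in> sets M" unfolding P_Z_le using ZP_sets by auto
  qed (rule P)
  also have "\<dots> = (\<Sum>z\<le>L. prob {\<omega>\<in>space M. Z \<omega> = z \<and> P \<omega>})"
    unfolding P_Z_le using ZP_sets
    by (subst finite_measure_finite_Union) (auto simp: disjoint_family_on_def)
  finally show ?thesis .
qed

text \<open>From a common state x, exactly one of the two chains moves up iff the uniform lies in this window.\<close>

definition crossing_window :: "nat \<Rightarrow> nat \<Rightarrow> real set" where
  "crossing_window N x = {u. min (1 - Pup N x) (1 - Rup N x) \<le> u \<and> u < max (1 - Pup N x) (1 - Rup N x)}"

lemma crossing_window_sets: "crossing_window N x \<in> sets borel"
  unfolding crossing_window_def by measurable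

lemma measure_crossing_window: "measure uniform01 (crossing_window N x) \<le> \<bar>Rup N x - Pup N x\<bar>"
proof -
  have "measure uniform01 (crossing_window N x)
      \<le> max (1 - Pup N x) (1 - Rup N x) - min (1 - Pup N x) (1 - Rup N x)"
    unfolding crossing_window_def by (rule measure_uniform01_interval_le) simp
  also have "\<dots> = \<bar>Rup N x - Pup N x\<bar>" by (simp add: max_def min_def abs_if)
  finally show ?thesis .
qed

lemma step_crossing_in_window:
  assumes N: "5 \<le> N"
    and cross: "(y \<le> x \<and> step (kdown N) (Pup N) x u < step (kdown N) (Rup N) y u)
              \<or> (x \<le> y \<and> step (kdown N) (Rup N) y u < step (kdown N) (Pup N) x u)"
  shows "x = y \<and> x \<le> N - 5 \<and> u \<in> crossing_window N x"
proof -
  have window: "x = y \<and> u \<in> crossing_window N x"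
    using step_crossing[OF kdown_plus_Pup_less_1[OF N] kdown_plus_Rup_less_1[OF N] cross]
    by (auto simp: crossing_window_def)
  moreover have "x \<le> N - 5"
  proof (rule ccontr)
    assume "\<not> x \<le> N - 5"
    then have "\<not> x + 5 \<le> N" by simp
    then have "Pup N x = 0" "Rup N x = 0" by (simp_all add: Pup_def Rup_def)
    then show False using window by (auto simp: crossing_window_def)
  qed
  ultimately show ?thesis by blast
qed

locale zeta_chain = prob_space M for M :: "'a measure" +
  fixes N :: nat and Y0 :: "'a \<Rightarrow> nat" and U :: "nat \<Rightarrow> 'a \<Rightarrow> real" and Y :: "nat \<Rightarrow> 'a \<Rightarrow> nat"
  assumes N: "5 \<le> N"
    and measurable_Y0: "Y0 \<in> measurable M (count_space UNIV)"
    and prob_Y0: "\<And>x. prob {\<omega>\<in>space M. Y0 \<omega> = x} = zeta N x"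
    and indep_U: "indep_vars (\<lambda>_. borel) U UNIV"
    and distr_U: "\<And>k. distr M borel (U k) = uniform01"
    and indep_Y0_U: "\<And>y0 B. B \<in> sets (PiM UNIV (\<lambda>_. (borel :: real measure))) \<Longrightarrow>
      prob {\<omega>\<in>space M. Y0 \<omega> = y0 \<and> (\<lambda>k. U k \<omega>) \<in> B}
      = prob {\<omega>\<in>space M. Y0 \<omega> = y0} * prob {\<omega>\<in>space M. (\<lambda>k. U k \<omega>) \<in> B}"
    and Y_eq: "\<And>k \<omega>. Y k \<omega> = chain (kdown N) (Rup N) (Y0 \<omega>) (\<lambda>j. U j \<omega>) k"
begin

lemma Y_Suc: "Y (Suc k) \<omega> = step (kdown N) (Rup N) (Y k \<omega>) (U k \<omega>)"
  by (simp add: Y_eq)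

lemma measurable_U: "U k \<in> borel_measurable M"
  using indep_U unfolding indep_vars_def by auto

lemma measurable_Y: "Y k \<in> measurable M (count_space UNIV)"
proof (induction k)
  case 0
  have "Y 0 = Y0" by (auto simp: Y_eq)
  then show ?case using measurable_Y0 by simp
next
  case (Suc k)
  have "(\<lambda>\<omega>. step (kdown N) (Rup N) i (U k \<omega>)) \<in> measurable M (count_space UNIV)" for i
    using measurable_comp[OF measurable_U measurable_step] by (simp add: comp_def)
  then show ?case
    unfolding Y_Suc[abs_def]
    using measurable_compose_countable[where f = "\<lambda>i \<omega>. step (kdown N) (Rup N) i (U k \<omega>)", OF _ Suc]
    by simp
qed

lemma prob_U:
  assumes "B \<in> sets borel"
  shows "prob {\<omega>\<in>space M. U k \<omega> \<in> B} = measure uniform01 B"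
proof -
  have "measure uniform01 B = measure (distr M borel (U k)) B" by (simp add: distr_U)
  also have "\<dots> = measure M (U k -` B \<inter> space M)"
    using assms measurable_U by (simp add: measure_distr)
  also have "U k -` B \<inter> space M = {\<omega>\<in>space M. U k \<omega> \<in> B}" by auto
  finally show ?thesis by simp
qed

lemma prob_chain_conj_U:
  assumes B: "B \<in> sets borel"
  shows "prob {\<omega>\<in>space M. chain (kdown N) (Rup N) y0 (\<lambda>j. U j \<omega>) k = y \<and> U k \<omega> \<in> B}
       = prob {\<omega>\<in>space M. chain (kdown N) (Rup N) y0 (\<lambda>j. U j \<omega>) k = y} * prob {\<omega>\<in>space M. U k \<omega> \<in> B}"
proof -
  let ?past = "\<lambda>\<omega>. restrict (\<lambda>i. U i \<omega>) {..<k}" and ?now = "\<lambda>\<omega>. restrict (\<lambda>i. U i \<omega>) {k}"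
  let ?A = "{v \<in> space (PiM {..<k} (\<lambda>_. borel)). chain (kdown N) (Rup N) y0 v k = y}"
  let ?B = "{v \<in> space (PiM {k} (\<lambda>_. (borel::real measure))). v k \<in> B}"
  have indep: "indep_var (PiM {..<k} (\<lambda>_. borel)) ?past (PiM {k} (\<lambda>_. borel)) ?now"
    by (rule indep_var_restrict[OF indep_U]) auto
  have A: "?A \<in> sets (PiM {..<k} (\<lambda>_. borel))"
    using measurable_chain[of k "{..<k}" "kdown N" "Rup N" y0] by measurable
  have B': "?B \<in> sets (PiM {k} (\<lambda>_. (borel::real measure)))"
    using B by measurable
  have chain_past: "chain (kdown N) (Rup N) y0 (?past \<omega>) k = chain (kdown N) (Rup N) y0 (\<lambda>j. U j \<omega>) k"
    for \<omega> by (rule chain_cong) simp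
  have "(\<lambda>\<omega>. (?past \<omega>, ?now \<omega>)) -` (?A \<times> ?B) \<inter> space M
      = {\<omega>\<in>space M. chain (kdown N) (Rup N) y0 (\<lambda>j. U j \<omega>) k = y \<and> U k \<omega> \<in> B}"
    "?past -` ?A \<inter> space M = {\<omega>\<in>space M. chain (kdown N) (Rup N) y0 (\<lambda>j. U j \<omega>) k = y}"
    "?now -` ?B \<inter> space M = {\<omega>\<in>space M. U k \<omega> \<in> B}"
    by (auto simp: space_PiM chain_past)
  then show ?thesis using indep_varD[OF indep A B'] by simp
qed

lemma sum_prob_Y0: "(\<Sum>z\<le>N - 4. prob {\<omega>\<in>space M. Y0 \<omega> = z}) = 1"
  using sum_zeta[of N] by (simp add: prob_Y0)

lemma prob_Y_conj_U:
  assumes B: "B \<in> sets borel"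
  shows "prob {\<omega>\<in>space M. Y k \<omega> = y \<and> U k \<omega> \<in> B}
       = prob {\<omega>\<in>space M. Y k \<omega> = y} * prob {\<omega>\<in>space M. U k \<omega> \<in> B}"
proof -
  let ?C = "\<lambda>z. {u. chain (kdown N) (Rup N) z u k = y}"
  let ?uk = "prob {\<omega>\<in>space M. U k \<omega> \<in> B}"
  have start: "prob {\<omega>\<in>space M. Y0 \<omega> = z \<and> (\<lambda>j. U j \<omega>) \<in> S}
      = prob {\<omega>\<in>space M. Y0 \<omega> = z} * prob {\<omega>\<in>space M. (\<lambda>j. U j \<omega>) \<in> S}"
    if "S = ?C z \<or> S = {u. chain (kdown N) (Rup N) z u k = y \<and> u k \<in> B}" for z S
    using that sets_PiM_chain_conj[OF B] sets_PiM_chain_conj[of UNIV "kdown N" "Rup N" z k y]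
    by (intro indep_Y0_U) auto
  have "prob {\<omega>\<in>space M. Y0 \<omega> = z \<and> (Y k \<omega> = y \<and> U k \<omega> \<in> B)}
      = prob {\<omega>\<in>space M. Y0 \<omega> = z \<and> Y k \<omega> = y} * ?uk" for z
  proof -
    have "prob {\<omega>\<in>space M. Y0 \<omega> = z \<and> (Y k \<omega> = y \<and> U k \<omega> \<in> B)}
        = prob {\<omega>\<in>space M. Y0 \<omega> = z}
          * prob {\<omega>\<in>space M. chain (kdown N) (Rup N) z (\<lambda>j. U j \<omega>) k = y \<and> U k \<omega> \<in> B}"
      using start[of "{u. chain (kdown N) (Rup N) z u k = y \<and> u k \<in> B}" z]
      by (simp add: Y_eq conj_left_commute cong: conj_cong)
    also have "\<dots> = prob {\<omega>\<in>space M. Y0 \<omega> = z}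
          * prob {\<omega>\<in>space M. chain (kdown N) (Rup N) z (\<lambda>j. U j \<omega>) k = y} * ?uk"
      by (simp add: prob_chain_conj_U[OF B])
    also have "\<dots> = prob {\<omega>\<in>space M. Y0 \<omega> = z \<and> Y k \<omega> = y} * ?uk"
      using start[of "?C z" z] by (simp add: Y_eq cong: conj_cong)
    finally show ?thesis .
  qed
  moreover have "{\<omega>\<in>space M. Y k \<omega> = y \<and> U k \<omega> \<in> B} \<in> sets M"
    "{\<omega>\<in>space M. Y k \<omega> = y} \<in> sets M"
    using measurable_Y[of k] measurable_U[of k] B by measurable
  ultimately show ?thesis
    using prob_eq_sum_prob_conj[OF measurable_Y0 sum_prob_Y0]
    by (simp add: sum_distrib_right)
qed

lemma prob_Y: "prob {\<omega>\<in>space M. Y k \<omega> = x} = zeta N x"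
proof (induction k arbitrary: x)
  case 0
  show ?case by (simp add: Y_eq prob_Y0)
next
  case (Suc k)
  have step_sets: "{u. step (kdown N) (Rup N) y u = x} \<in> sets borel" for y
    using measurable_sets[OF measurable_step, of "{x}" "kdown N" "Rup N" y] by (simp add: vimage_def)
  have "prob {\<omega>\<in>space M. Y (Suc k) \<omega> = x}
      = (\<Sum>y\<le>N - 4. prob {\<omega>\<in>space M. Y k \<omega> = y \<and> Y (Suc k) \<omega> = x})"
    using measurable_Y[of "Suc k"] sum_zeta[of N] Suc
    by (intro prob_eq_sum_prob_conj[OF measurable_Y]) (simp_all, measurable)
  also have "\<dots> = (\<Sum>y\<le>N - 4. zeta N y * Rtrans N y x)"
  proof (rule sum.cong[OF refl])
    fix y assume "y \<in> {..N - 4}"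
    then have "measure uniform01 {u. step (kdown N) (Rup N) y u = x} = Rtrans N y x"
      using N by (intro measure_uniform01_step) auto
    moreover have "{\<omega>\<in>space M. Y k \<omega> = y \<and> Y (Suc k) \<omega> = x}
        = {\<omega>\<in>space M. Y k \<omega> = y \<and> U k \<omega> \<in> {u. step (kdown N) (Rup N) y u = x}}"
      by (auto simp: Y_Suc)
    ultimately show "prob {\<omega>\<in>space M. Y k \<omega> = y \<and> Y (Suc k) \<omega> = x} = zeta N y * Rtrans N y x"
      using prob_Y_conj_U[OF step_sets, of k y] prob_U[OF step_sets, of k] Suc by simp
  qed
  also have "\<dots> = zeta N x" by (rule zeta_stationary)
  finally show ?case .
qed

lemma prob_crossing_le:
  fixes X :: "nat \<Rightarrow> 'a \<Rightarrow> nat" and C :: "nat \<Rightarrow> 'a \<Rightarrow> bool"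
  assumes X_Suc: "\<And>k \<omega>. X (Suc k) \<omega> = step (kdown N) (Pup N) (X k \<omega>) (U k \<omega>)"
    and C: "\<And>k \<omega>. C k \<omega> \<Longrightarrow> (Y k \<omega> \<le> X k \<omega> \<and> X (Suc k) \<omega> < Y (Suc k) \<omega>)
                             \<or> (X k \<omega> \<le> Y k \<omega> \<and> Y (Suc k) \<omega> < X (Suc k) \<omega>)"
  shows "measure M {\<omega>\<in>space M. (\<Sum>k<n. (if C k \<omega> then 1 else 0 :: nat)) > 0} \<le> 2 ^ (N + 1) * real n / fact N"
proof -
  define E where "E k x = {\<omega>\<in>space M. Y k \<omega> = x \<and> U k \<omega> \<in> crossing_window N x}" for k x
  have E_sets: "E k x \<in> sets M" for k x
    unfolding E_def using measurable_Y[of k] measurable_U[of k] crossing_window_sets[of N x]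
    by measurable
  have "{\<omega>\<in>space M. (\<Sum>k<n. (if C k \<omega> then 1 else 0 :: nat)) > 0} \<subseteq> (\<Union>k<n. \<Union>x\<le>N - 5. E k x)"
  proof safe
    fix \<omega> assume \<omega>: "\<omega> \<in> space M" "0 < (\<Sum>k<n. (if C k \<omega> then 1 else 0 :: nat))"
    have "\<exists>k<n. C k \<omega>"
    proof (rule ccontr)
      assume "\<not> (\<exists>k<n. C k \<omega>)"
      then have "(\<Sum>k<n. (if C k \<omega> then 1 else 0 :: nat)) = 0" by (intro sum.neutral) auto
      with \<omega> show False by simp
    qed
    then obtain k where k: "k < n" "C k \<omega>" by blast
    have "(Y k \<omega> \<le> X k \<omega> \<and> step (kdown N) (Pup N) (X k \<omega>) (U k \<omega>) < step (kdown N) (Rup N) (Y k \<omega>) (U k \<omega>))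
        \<or> (X k \<omega> \<le> Y k \<omega> \<and> step (kdown N) (Rup N) (Y k \<omega>) (U k \<omega>) < step (kdown N) (Pup N) (X k \<omega>) (U k \<omega>))"
      using C[OF k(2)] unfolding X_Suc Y_Suc .
    then have "X k \<omega> = Y k \<omega> \<and> X k \<omega> \<le> N - 5 \<and> U k \<omega> \<in> crossing_window N (X k \<omega>)"
      by (rule step_crossing_in_window[OF N])
    then show "\<omega> \<in> (\<Union>k<n. \<Union>x\<le>N - 5. E k x)"
      using k(1) \<omega> unfolding E_def by auto
  qed
  then have "measure M {\<omega>\<in>space M. (\<Sum>k<n. (if C k \<omega> then 1 else 0 :: nat)) > 0}
      \<le> measure M (\<Union>k<n. \<Union>x\<le>N - 5. E k x)"
    using E_sets by (intro finite_measure_mono) auto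
  also have "\<dots> \<le> (\<Sum>k<n. measure M (\<Union>x\<le>N - 5. E k x))"
    using E_sets by (intro measure_UNION_le) auto
  also have "\<dots> \<le> (\<Sum>k<n. \<Sum>x\<le>N - 5. measure M (E k x))"
    using E_sets by (intro sum_mono measure_UNION_le) auto
  also have "\<dots> \<le> (\<Sum>k<n. \<Sum>x\<le>N - 5. zeta N x * \<bar>Rup N x - Pup N x\<bar>)"
  proof (intro sum_mono)
    fix k x
    have "measure M (E k x) = zeta N x * measure uniform01 (crossing_window N x)"
      unfolding E_def
      using prob_Y_conj_U[OF crossing_window_sets, of k x] prob_Y[of k x] prob_U[OF crossing_window_sets, of k]
      by simp
    also have "\<dots> \<le> zeta N x * \<bar>Rup N x - Pup N x\<bar>"
      by (intro mult_left_mono measure_crossing_window zeta_nonneg)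
    finally show "measure M (E k x) \<le> zeta N x * \<bar>Rup N x - Pup N x\<bar>" .
  qed
  also have "\<dots> \<le> (\<Sum>k<n. 2 ^ (N + 1) / fact N)"
    by (intro sum_mono sum_zeta_mult_abs_Rup_minus_Pup_le[OF N])
  also have "\<dots> = 2 ^ (N + 1) * real n / fact N" by simp
  finally show ?thesis .
qed

end

theorem lemma5p6:
  fixes M :: "'a measure" and N n :: nat
    and X0 Y0 :: "'a \<Rightarrow> nat" and U :: "nat \<Rightarrow> 'a \<Rightarrow> real"
    and X Y :: "nat \<Rightarrow> 'a \<Rightarrow> nat"
  assumes "prob_space M"
    and "N \<ge> 5"
    and "X0 \<in> measurable M (count_space UNIV)"
    and "Y0 \<in> measurable M (count_space UNIV)"
    and "\<forall>x. prob_space.prob M {\<omega> \<in> space M. X0 \<omega> = x} = checkpi N x"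
    and "\<forall>x. prob_space.prob M {\<omega> \<in> space M. Y0 \<omega> = x} = zeta N x"
    and "prob_space.indep_vars M (\<lambda>_. borel) U UNIV"
    and "\<forall>k. distr M borel (U k) = uniform_measure lborel {0..1}"
    and "\<forall>A B. B \<in> sets (PiM UNIV (\<lambda>_. (borel :: real measure))) \<longrightarrow>
           prob_space.prob M {\<omega> \<in> space M. (X0 \<omega>, Y0 \<omega>) \<in> A \<and> (\<lambda>k. U k \<omega>) \<in> B}
           = prob_space.prob M {\<omega> \<in> space M. (X0 \<omega>, Y0 \<omega>) \<in> A}
             * prob_space.prob M {\<omega> \<in> space M. (\<lambda>k. U k \<omega>) \<in> B}"
    and "\<forall>k \<omega>. X k \<omega> = chain (kdown N) (Pup N) (X0 \<omega>) (\<lambda>j. U j \<omega>) k"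
    and "\<forall>k \<omega>. Y k \<omega> = chain (kdown N) (Rup N) (Y0 \<omega>) (\<lambda>j. U j \<omega>) k"
  shows "measure M {\<omega> \<in> space M.
             (\<Sum>k<n. (if X k \<omega> \<ge> Y k \<omega> \<and> X (Suc k) \<omega> < Y (Suc k) \<omega> then 1 else 0 :: nat)) > 0}
           \<le> 2 ^ (N + 1) * real n / fact N
       \<and> measure M {\<omega> \<in> space M.
             (\<Sum>k<n. (if X k \<omega> \<le> Y k \<omega> \<and> X (Suc k) \<omega> > Y (Suc k) \<omega> then 1 else 0 :: nat)) > 0}
           \<le> 2 ^ (N + 1) * real n / fact N"
proof -
  interpret zeta_chain M N Y0 U Y
  proof (rule zeta_chain.intro[OF assms(1)], rule zeta_chain_axioms.intro)
    fix y0 and B :: "(nat \<Rightarrow> real) set"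
    assume "B \<in> sets (PiM UNIV (\<lambda>_. borel))"
    then show "measure M {\<omega>\<in>space M. Y0 \<omega> = y0 \<and> (\<lambda>k. U k \<omega>) \<in> B}
        = measure M {\<omega>\<in>space M. Y0 \<omega> = y0} * measure M {\<omega>\<in>space M. (\<lambda>k. U k \<omega>) \<in> B}"
      using assms(9)[rule_format, of B "{p. snd p = y0}"] by simp
  qed (use assms(2,4,6,7,8,11) in simp_all)
  have X_Suc: "X (Suc k) \<omega> = step (kdown N) (Pup N) (X k \<omega>) (U k \<omega>)" for k \<omega>
    using assms(10) by simp
  show ?thesis
    by (intro conjI; rule prob_crossing_le[OF X_Suc]) auto
qed

end
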